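(* Let $\{\mathcal{T}_t\}_{t\ge0}$ be a quasi-free hybrid dynamical semigroup with $\mathcal{T}_t[W(\xi)]=f_t(\xi)W(S_t\xi)$. Then: (1) there is a real $d\times d$ matrix $Z$ with $S_t=\exp(Zt)$ for all $t\ge0$; (2) $f_t(0)=1$ for all $t\ge0$ and $f_0(\xi)=1$ for all $\xi\in\Xi$; (3) $f_{t+s}(\xi)=f_s(S_t\xi)\,f_t(\xi)$ for all $t,s\ge0$ and all $\xi\in\Xi$.
   Context: $\mathcal{H}=L^2(\mathbb{R}^n)$ with position and momentum operators $Q_j,P_j$. $\mathcal{N}=\mathcal{B}(\mathcal{H})\otimes L^\infty(\mathbb{R}^s)$, whose elements are identified with (bounded measurable) functions $x\mapsto F(x)\in\mathcal{B}(\mathcal{H})$ on $\mathbb{R}^s$; $\mathbb{1}$ denotes the identity. $d=2n+s$, $\Xi=\mathbb{R}^{2n}\oplus\mathbb{R}^s=\mathbb{R}^d$; write $\xi=(\zeta,k)$, $\zeta=(u,v)\in\mathbb{R}^{2n}$, $k\in\mathbb{R}^s$. Hybrid Weyl operators: $W(\xi)(x)=W_1(\zeta)e^{ix^{T}k}$ with $W_1(u,v)=\exp\{i(u^{T}Q+v^{T}P)\}$. $\sigma$ is the real $d\times d$ matrix with $\sigma_{i,i+n}=1$, $\sigma_{i+n,i}=-1$ ($1\le i\le n$), other entries $0$; $W(\xi+\eta)=W(\xi)W(\eta)\exp\{\tfrac i2\xi^{T}\sigma\eta\}$. A quasi-free hybrid dynamical semigroup is a family $\{\mathcal{T}_t,t\ge0\}$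 of linear operators, defined at least on the linear span of the Weyl operators (with values in $\mathcal{N}$), such that for all $t,s\ge0$: (a) $\mathcal{T}_t[\mathbb{1}]=\mathbb{1}$; (b) $\mathcal{T}_0$ is the identity; (c) $\mathcal{T}_t\circ\mathcal{T}_s=\mathcal{T}_{t+s}$; (d) for every integer $N$, $\phi_k\in\mathcal{H}$, $\xi^k\in\Xi$, $\sum_{k,l=1}^N\langle\phi_k|\mathcal{T}_t[W(\xi^k)^\dagger W(\xi^l)]|\phi_l\rangle\ge0$; (e) $\mathcal{T}_t[W(\xi)]=f_t(\xi)W(S_t\xi)$ for all $\xi$, with $S_t$ a real linear map $\Xi\to\Xi$ and $f_t:\Xi\to\mathbb{C}$ continuous; (f) $t\mapsto f_t(\xi)$ and $t\mapsto S_t$ are continuous. *)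

theory Defs
  imports "HOL-Analysis.Analysis"
begin

text \<open>Phase space Xi = R^{2n} (+) R^s = R^d, realised as real vectors indexed by
  the finite type (('n + 'n) + 's): index Inl (Inl i) is u_i, Inl (Inr i) is v_i,
  Inr j is k_j.\<close>

type_synonym ('n,'s) xi = "real ^ (('n + 'n) + 's)"
type_synonym ('n,'s) mat = "real ^ (('n + 'n) + 's) ^ (('n + 'n) + 's)"

definition xi_u :: "('n::finite,'s::finite) xi \<Rightarrow> real ^ 'n" where
  "xi_u \<xi> = (\<chi> i. \<xi> $ Inl (Inl i))"
definition xi_v :: "('n::finite,'s::finite) xi \<Rightarrow> real ^ 'n" where
  "xi_v \<xi> = (\<chi> i. \<xi> $ Inl (Inr i))"
definition xi_k :: "('n::finite,'s::finite) xi \<Rightarrow> real ^ 's" where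
  "xi_k \<xi> = (\<chi> j. \<xi> $ Inr j)"

text \<open>Operators on wave functions psi : R^n -> C, and elements of
  N = B(H) (x) L^infty(R^s) as functions x |-> operator.\<close>

type_synonym 'n hop = "(real ^ 'n \<Rightarrow> complex) \<Rightarrow> (real ^ 'n \<Rightarrow> complex)"
type_synonym ('n,'s) nel = "real ^ 's \<Rightarrow> 'n hop"

text \<open>Weyl operator W_1(u,v) = exp(i(u.Q + v.P)) with P = -i d/dq, written out:
  (W_1(u,v) psi)(q) = exp(i u.v/2) exp(i u.q) psi(q+v).\<close>
definition weyl1 :: "real ^ 'n \<Rightarrow> real ^ 'n \<Rightarrow> 'n::finite hop" where
  "weyl1 u v = (\<lambda>\<psi> q. exp (\<i> * complex_of_real (inner u v / 2))
                     * exp (\<i> * complex_of_real (inner u q)) * \<psi> (q + v))"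

definition hweyl :: "('n::finite,'s::finite) xi \<Rightarrow> ('n,'s) nel" where
  "hweyl \<xi> = (\<lambda>x \<psi> q. exp (\<i> * complex_of_real (inner x (xi_k \<xi>)))
                          * weyl1 (xi_u \<xi>) (xi_v \<xi>) \<psi> q)"

definition nunit :: "('n::finite,'s::finite) nel" where
  "nunit = (\<lambda>x \<psi>. \<psi>)"

definition nlin :: "complex \<Rightarrow> ('n::finite,'s::finite) nel \<Rightarrow> complex \<Rightarrow> ('n,'s) nel \<Rightarrow> ('n,'s) nel" where
  "nlin a A b B = (\<lambda>x \<psi> q. a * A x \<psi> q + b * B x \<psi> q)"

definition nmult :: "('n::finite,'s::finite) nel \<Rightarrow> ('n,'s) nel \<Rightarrow> ('n,'s) nel" where
  "nmult A B = (\<lambda>x \<psi>. A x (B x \<psi>))"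

text \<open>Adjoint of a hybrid Weyl operator (Weyl operators are unitary, W(xi)^dagger = W(-xi)).\<close>
definition hweyl_adj :: "('n::finite,'s::finite) xi \<Rightarrow> ('n,'s) nel" where
  "hweyl_adj \<xi> = hweyl (- \<xi>)"

definition weyl_span :: "('n::finite,'s::finite) nel set" where
  "weyl_span = {(\<lambda>x \<psi> q. \<Sum>j<m. c j * hweyl (\<xi> j) x \<psi> q) | (m::nat) (c::nat \<Rightarrow> complex) (\<xi>::nat \<Rightarrow> ('n,'s) xi). True}"

definition sq_integrable :: "(real ^ 'n::finite \<Rightarrow> complex) \<Rightarrow> bool" where
  "sq_integrable \<phi> \<longleftrightarrow> \<phi> \<in> borel_measurable lborel \<and> integrable lborel (\<lambda>q. (cmod (\<phi> q))\<^sup>2)"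

definition mel :: "(real ^ 'n::finite \<Rightarrow> complex) \<Rightarrow> 'n hop \<Rightarrow> (real ^ 'n \<Rightarrow> complex) \<Rightarrow> complex" where
  "mel \<phi> A \<psi> = (LINT q|lborel. cnj (\<phi> q) * A \<psi> q)"

primrec matpow :: "real ^ 'd ^ 'd \<Rightarrow> nat \<Rightarrow> real ^ 'd ^ 'd::finite" where
  "matpow A 0 = mat 1"
| "matpow A (Suc k) = A ** matpow A k"

definition mat_exp :: "real ^ 'd ^ 'd \<Rightarrow> real ^ 'd ^ 'd::finite" where
  "mat_exp A = (\<Sum>k. (1 / fact k) *\<^sub>R matpow A k)"

definition qf_hybrid_dyn_semigroup ::
  "(real \<Rightarrow> ('n::finite,'s::finite) nel \<Rightarrow> ('n,'s) nel) \<Rightarrow> (real \<Rightarrow> ('n,'s) xi \<Rightarrow> complex)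
   \<Rightarrow> (real \<Rightarrow> ('n,'s) mat) \<Rightarrow> bool" where
  "qf_hybrid_dyn_semigroup T f S \<longleftrightarrow>
     \<comment> \<open>linearity on the span of the Weyl operators\<close>
     (\<forall>t\<ge>0. \<forall>A\<in>weyl_span. \<forall>B\<in>weyl_span. \<forall>a b.
        T t (nlin a A b B) = nlin a (T t A) b (T t B)) \<and>
     \<comment> \<open>(a)\<close>
     (\<forall>t\<ge>0. T t nunit = nunit) \<and>
     \<comment> \<open>(b)\<close>
     (\<forall>A\<in>weyl_span. T 0 A = A) \<and>
     \<comment> \<open>(c)\<close>
     (\<forall>t\<ge>0. \<forall>s\<ge>0. \<forall>A\<in>weyl_span. T t (T s A) = T (t + s) A) \<and>
     \<comment> \<open>(d)\<close>
     (\<forall>t\<ge>0. \<forall>(N::nat) (\<phi>::nat \<Rightarrow> real ^ 'n \<Rightarrow> complex) (\<xi>::nat \<Rightarrow> ('n,'s) xi).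
        (\<forall>k. sq_integrable (\<phi> k)) \<longrightarrow>
        (AE x in lborel.
           (let z = (\<Sum>k\<in>{1..N}. \<Sum>l\<in>{1..N}.
                      mel (\<phi> k) (T t (nmult (hweyl_adj (\<xi> k)) (hweyl (\<xi> l))) x) (\<phi> l))
            in Im z = 0 \<and> Re z \<ge> 0))) \<and>
     \<comment> \<open>(e)\<close>
     (\<forall>t\<ge>0. \<forall>\<xi>. T t (hweyl \<xi>) = (\<lambda>x \<psi> q. f t \<xi> * hweyl (S t *v \<xi>) x \<psi> q)) \<and>
     (\<forall>t\<ge>0. continuous_on UNIV (f t)) \<and>
     \<comment> \<open>(f)\<close>
     (\<forall>\<xi>. continuous_on {0..} (\<lambda>t. f t \<xi>)) \<and>
     continuous_on {0..} S"

end

theory Submission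
  imports Defs
begin

text \<open>
  Applying the semigroup law to a Weyl operator, T_s (T_t W(\<xi>)) = f_t(\<xi>) f_s(S_t \<xi>) W(S_s S_t \<xi>)
  must equal T_(t+s) W(\<xi>) = f_(t+s)(\<xi>) W(S_(t+s) \<xi>). A multiple c W(\<xi>) of a Weyl operator
  determines c, and also \<xi> when c \<noteq> 0. This yields the cocycle identity for f, and
  S_(t+s) \<xi> = S_s S_t \<xi> wherever f_(t+s)(\<xi>) \<noteq> 0; hence near \<xi> = 0, since f_(t+s) is
  continuous with f_(t+s)(0) = 1, and then everywhere by linearity. So S is a continuous
  one-parameter semigroup of matrices, and S_t = exp(t Z) by the classical argument: the mean
  of S over a short interval [0, h] is invertible, which makes S differentiable with S' = S Z,
  and then S_t exp(-t Z) is constant.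
\<close>

section \<open>Continuous semigroups in Banach algebras\<close>

lemma neumann_series_right_inverse:
  fixes x :: "'a::{banach,real_normed_algebra_1}"
  assumes "norm (1 - x) < 1"
  shows "x * (\<Sum>n. (1 - x) ^ n) = 1"
proof -
  have "summable (\<lambda>n. (1 - x) ^ n)"
  proof (rule summable_comparison_test)
    show "summable (\<lambda>n. norm (1 - x) ^ n)"
      using assms by simp
  qed (simp add: norm_power_ineq)
  then have "(\<lambda>n. x * (1 - x) ^ n) sums (x * (\<Sum>n. (1 - x) ^ n))"
    by (intro sums_mult summable_sums)
  moreover have "(\<lambda>n. x * (1 - x) ^ n) sums (1 - 0)"
  proof -
    have "(\<lambda>n. (1 - x) ^ n) \<longlonglongrightarrow> 0"
      using assms by (rule LIMSEQ_power_zero)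
    from telescope_sums'[OF this] show ?thesis
      by (simp add: algebra_simps)
  qed
  ultimately show ?thesis
    using sums_unique2 by fastforce
qed

lemma integral_has_vector_derivative_within_atLeast:
  fixes U :: "real \<Rightarrow> 'a::banach"
  assumes "continuous_on {a..} U" and "a \<le> x"
  shows "((\<lambda>u. integral {a..u} U) has_vector_derivative U x) (at x within {a..})"
proof -
  have "((\<lambda>u. integral {a..u} U) has_vector_derivative U x) (at x within {a..x+1})"
    using assms by (intro integral_has_vector_derivative continuous_on_subset[OF assms(1)]) auto
  moreover have "at x within {a..x+1} = at x within {a..}"
    by (rule at_within_nhd[where S="{..<x+1}"]) auto
  ultimately show ?thesis
    by simp
qed

lemma integral_right_invertible_near_0:
  fixes U :: "real \<Rightarrow> 'a::{banach,real_normed_algebra_1}"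
  assumes cont: "continuous_on {0..} U" and U0: "U 0 = 1"
  shows "\<exists>h>0. \<exists>M'. integral {0..h} U * M' = 1"
proof -
  obtain h where h: "h > 0" and near: "\<And>r. r \<in> {0..h} \<Longrightarrow> norm (U r - 1) \<le> 1/2"
  proof -
    obtain d where "d > 0" and d: "\<And>r. r \<in> {0..} \<Longrightarrow> dist r 0 < d \<Longrightarrow> dist (U r) (U 0) < 1/2"
      using cont unfolding continuous_on_iff by (metis atLeast_iff half_gt_zero_iff order_refl zero_less_one)
    show ?thesis
      by (rule that[of "d/2"]) (use \<open>d > 0\<close> d U0 in \<open>auto simp: dist_norm less_imp_le\<close>)
  qed
  define M where "M = integral {0..h} U"
  have int: "((\<lambda>r. U r - 1) has_integral (M - h *\<^sub>R 1)) {0..h}"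
    unfolding M_def using h has_integral_const_real[of "1::'a" 0 h]
    by (intro has_integral_diff integrable_integral integrable_continuous_real
        continuous_on_subset[OF cont]) auto
  have "norm (M - h *\<^sub>R 1) \<le> 1/2 * h"
    using has_integral_bound_real[where S="{}" and B="1/2", OF _ _ int] near h by simp
  moreover have "1 - (1/h) *\<^sub>R M = - ((1/h) *\<^sub>R (M - h *\<^sub>R 1))"
    using h by (simp add: algebra_simps)
  ultimately have "norm (1 - (1/h) *\<^sub>R M) < 1"
    using h by (simp add: divide_simps)
  from neumann_series_right_inverse[OF this]
  have "M * ((1/h) *\<^sub>R (\<Sum>n. (1 - (1/h) *\<^sub>R M) ^ n)) = 1"
    using h by (simp add: mult_scaleR_right)
  then show ?thesis
    using h M_def by blast
qed

lemma semigroup_mult_integral: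
  fixes U :: "real \<Rightarrow> 'a::{banach,real_normed_algebra}"
  assumes cont: "continuous_on {0..} U"
    and mult: "\<And>t s. t \<ge> 0 \<Longrightarrow> s \<ge> 0 \<Longrightarrow> U (t + s) = U t * U s"
    and t: "t \<ge> 0" and h: "h \<ge> 0"
  shows "U t * integral {0..h} U = integral {0..t+h} U - integral {0..t} U"
proof -
  have integrable: "U integrable_on {0..b}" for b
    by (intro integrable_continuous_real continuous_on_subset[OF cont]) auto
  have "((\<lambda>r. U t * U r) has_integral U t * integral {0..h} U) {0..h}"
    using integrable by (intro has_integral_mult_right integrable_integral) auto
  then have "((\<lambda>r. U (t + r)) has_integral U t * integral {0..h} U) {0..h}"
    by (rule has_integral_eq[rotated]) (use mult t in auto)
  then have "(U has_integral U t * integral {0..h} U) {t..t+h}"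
    using has_integral_shift_Icc_real[of U t "U t * integral {0..h} U" 0 h]
    by (simp add: o_def add.commute)
  moreover have "integral {0..t} U + integral {t..t+h} U = integral {0..t+h} U"
    using integrable t h by (intro Henstock_Kurzweil_Integration.integral_combine) auto
  ultimately show ?thesis
    by (simp add: integral_unique algebra_simps)
qed

lemma continuous_semigroup_has_vector_derivative:
  fixes U :: "real \<Rightarrow> 'a::{banach,real_normed_algebra_1}"
  assumes cont: "continuous_on {0..} U" and U0: "U 0 = 1"
    and mult: "\<And>t s. t \<ge> 0 \<Longrightarrow> s \<ge> 0 \<Longrightarrow> U (t + s) = U t * U s"
  shows "\<exists>Z. \<forall>t\<ge>0. (U has_vector_derivative U t * Z) (at t within {0..})"
proof -
  obtain h M' where h: "h > 0" and M': "integral {0..h} U * M' = 1"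
    using integral_right_invertible_near_0[OF cont U0] by blast
  define N where "N u = integral {0..u} U" for u
  \<comment> \<open>\<open>U\<close> is recovered from its integral \<open>N\<close>, which is differentiable\<close>
  have U_eq: "U s = (N (s + h) - N s) * M'" if "s \<in> {0..}" for s
  proof -
    have "U s * integral {0..h} U = N (s + h) - N s"
      unfolding N_def using semigroup_mult_integral[of U, OF cont mult, of s h] that h by simp
    then show ?thesis
      using M' by (metis mult.assoc mult.right_neutral)
  qed
  have "(U has_vector_derivative U t * ((U h - 1) * M')) (at t within {0..})" if t: "t \<ge> 0" for t
  proof -
    have "(N has_vector_derivative U (t + h)) (at (t + h) within {0..})"
      unfolding N_def using t h by (intro integral_has_vector_derivative_within_atLeast cont) simp
    then have "(N has_vector_derivative U (t + h)) (at (t + h) within (\<lambda>s. s + h) ` {0..})"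
      by (rule has_vector_derivative_within_subset) (use h in auto)
    moreover have "((\<lambda>s. s + h) has_vector_derivative 1) (at t within {0..})"
      by (auto intro!: derivative_eq_intros)
    ultimately have "((\<lambda>s. N (s + h)) has_vector_derivative U (t + h)) (at t within {0..})"
      using vector_diff_chain_within[of "\<lambda>s. s + h" 1 t "{0..}" N] by (simp add: o_def)
    moreover have "(N has_vector_derivative U t) (at t within {0..})"
      unfolding N_def using t by (intro integral_has_vector_derivative_within_atLeast cont) simp
    ultimately have "((\<lambda>s. (N (s + h) - N s) * M') has_vector_derivative (U (t + h) - U t) * M')
        (at t within {0..})"
      by (intro has_vector_derivative_mult_left has_vector_derivative_diff)
    from has_vector_derivative_transform[OF _ U_eq this]
    have "(U has_vector_derivative (U (t + h) - U t) * M') (at t within {0..})"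
      using t by simp
    then show ?thesis
      using mult[OF t, of h] h by (simp add: algebra_simps)
  qed
  then show ?thesis
    by blast
qed

lemma has_vector_derivative_right_mult_eq_exp:
  fixes U :: "real \<Rightarrow> 'a::{banach,real_normed_algebra_1}"
  assumes U0: "U 0 = 1"
    and der: "\<And>t. t \<ge> 0 \<Longrightarrow> (U has_vector_derivative U t * Z) (at t within {0..})"
    and t: "t \<ge> 0"
  shows "U t = exp (t *\<^sub>R Z)"
proof -
  define V where "V t = U t * exp (t *\<^sub>R (- Z))" for t
  have "(V has_vector_derivative 0) (at s within {0..})" if "s \<ge> 0" for s
  proof -
    have "((\<lambda>t. exp (t *\<^sub>R (- Z))) has_vector_derivative (- Z) * exp (s *\<^sub>R (- Z)))
        (at s within {0..})"
      by (rule has_vector_derivative_at_within[OF exp_scaleR_has_vector_derivative_left])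
    from has_vector_derivative_mult[OF der[OF that] this]
    show ?thesis
      unfolding V_def by (simp add: mult.assoc)
  qed
  then obtain c where "\<And>s. s \<in> {0..} \<Longrightarrow> V s = c"
    using has_vector_derivative_zero_constant[of "{0..}" V] by (auto simp: convex_real_interval)
  then have "V t = V 0"
    using t by simp
  also have "\<dots> = 1"
    using U0 by (simp add: V_def)
  finally have V1: "U t * exp (t *\<^sub>R (- Z)) = 1"
    unfolding V_def .
  have "U t = U t * (exp (t *\<^sub>R (- Z)) * exp (t *\<^sub>R Z))"
    using exp_minus_inverse[of "- (t *\<^sub>R Z)"] by simp
  also have "\<dots> = exp (t *\<^sub>R Z)"
    by (simp only: V1 mult.assoc[symmetric] mult_1_left)
  finally show ?thesis .
qed

lemma continuous_semigroup_eq_exp: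
  fixes U :: "real \<Rightarrow> 'a::{banach,real_normed_algebra_1}"
  assumes "continuous_on {0..} U" and "U 0 = 1"
    and "\<And>t s. t \<ge> 0 \<Longrightarrow> s \<ge> 0 \<Longrightarrow> U (t + s) = U t * U s"
  shows "\<exists>Z. \<forall>t\<ge>0. U t = exp (t *\<^sub>R Z)"
proof -
  obtain Z where "\<And>t. t \<ge> 0 \<Longrightarrow> (U has_vector_derivative U t * Z) (at t within {0..})"
    using continuous_semigroup_has_vector_derivative[of U, OF assms] by blast
  from has_vector_derivative_right_mult_eq_exp[OF \<open>U 0 = 1\<close> this] show ?thesis
    by blast
qed

section \<open>Square matrices as a Banach algebra\<close>

text \<open>Square matrices with the operator norm form a Banach algebra; this gives access to the
  library's \<open>exp\<close> and its derivative.\<close>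

typedef (overloaded) ('d::finite) sq_matrix = "UNIV :: (real^'d^'d) set"
  morphisms to_matrix of_matrix
  by simp

setup_lifting type_definition_sq_matrix

lemma onorm_matrix_vector_mult_eq_0: "onorm ((*v) (A::real^'m::finite^'n::finite)) = 0 \<longleftrightarrow> A = 0"
  by (simp add: onorm_eq_0 matrix_eq)

lemma onorm_matrix_vector_mult_add:
  "onorm ((*v) ((A::real^'m::finite^'n::finite) + B)) \<le> onorm ((*v) A) + onorm ((*v) B)"
proof -
  have "(*v) (A + B) = (\<lambda>x. A *v x + B *v x)"
    by (simp add: fun_eq_iff matrix_vector_mult_add_rdistrib)
  then show ?thesis
    using onorm_triangle[OF matrix_vector_mul_bounded_linear matrix_vector_mul_bounded_linear] by simp
qed

lemma onorm_matrix_vector_mult_scaleR: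
  "onorm ((*v) (c *\<^sub>R (A::real^'m::finite^'n::finite))) = \<bar>c\<bar> * onorm ((*v) A)"
proof -
  have "(*v) (c *\<^sub>R A) = (\<lambda>x. c *\<^sub>R (A *v x))"
    by (simp add: fun_eq_iff scaleR_matrix_vector_assoc)
  then show ?thesis
    using onorm_scaleR[OF matrix_vector_mul_bounded_linear] by simp
qed

lemma onorm_matrix_vector_mult_mult:
  "onorm ((*v) ((A::real^'m::finite^'n::finite) ** (B::real^'k::finite^'m))) \<le> onorm ((*v) A) * onorm ((*v) B)"
proof -
  have "(*v) (A ** B) = (*v) A \<circ> (*v) B"
    by (simp add: fun_eq_iff matrix_vector_mul_assoc)
  then show ?thesis
    using onorm_compose[OF matrix_vector_mul_bounded_linear matrix_vector_mul_bounded_linear] by simp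
qed

lemma onorm_matrix_vector_mult_mat_1: "onorm ((*v) (mat 1 :: real^'n::finite^'n)) = 1"
proof -
  have "(*v) (mat 1 :: real^'n^'n) = (\<lambda>x. x)"
    by (simp add: fun_eq_iff)
  then show ?thesis
    using onorm_id by simp
qed

lemma matrix_add_rdistrib: "((A::real^'m::finite^'n::finite) + B) ** (C::real^'k::finite^'m) = A ** C + B ** C"
  by (simp add: matrix_eq matrix_vector_mul_assoc[symmetric] matrix_vector_mult_add_rdistrib)

lemma mat_1_neq_0: "mat 1 \<noteq> (0::real^'n::finite^'n)"
  by (simp add: vec_eq_iff mat_def)

instantiation sq_matrix :: (finite) real_normed_algebra_1
begin

lift_definition zero_sq_matrix :: "'a sq_matrix" is 0 .
lift_definition one_sq_matrix :: "'a sq_matrix" is "mat 1" .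
lift_definition plus_sq_matrix :: "'a sq_matrix \<Rightarrow> 'a sq_matrix \<Rightarrow> 'a sq_matrix" is "(+)" .
lift_definition minus_sq_matrix :: "'a sq_matrix \<Rightarrow> 'a sq_matrix \<Rightarrow> 'a sq_matrix" is "(-)" .
lift_definition uminus_sq_matrix :: "'a sq_matrix \<Rightarrow> 'a sq_matrix" is uminus .
lift_definition times_sq_matrix :: "'a sq_matrix \<Rightarrow> 'a sq_matrix \<Rightarrow> 'a sq_matrix" is "(**)" .
lift_definition scaleR_sq_matrix :: "real \<Rightarrow> 'a sq_matrix \<Rightarrow> 'a sq_matrix" is scaleR .
lift_definition norm_sq_matrix :: "'a sq_matrix \<Rightarrow> real" is "\<lambda>A. onorm ((*v) A)" .

definition sgn_sq_matrix :: "'a sq_matrix \<Rightarrow> 'a sq_matrix"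
  where "sgn_sq_matrix A = inverse (norm A) *\<^sub>R A"

definition dist_sq_matrix :: "'a sq_matrix \<Rightarrow> 'a sq_matrix \<Rightarrow> real"
  where "dist_sq_matrix A B = norm (A - B)"

definition uniformity_sq_matrix :: "('a sq_matrix \<times> 'a sq_matrix) filter"
  where "uniformity_sq_matrix = (INF e\<in>{0<..}. principal {(A, B). dist A B < e})"

definition open_sq_matrix :: "'a sq_matrix set \<Rightarrow> bool"
  where "open_sq_matrix U = (\<forall>A\<in>U. \<forall>\<^sub>F (A', B) in uniformity. A' = A \<longrightarrow> B \<in> U)"

instance
  by standard
    (simp_all add: dist_sq_matrix_def open_sq_matrix_def sgn_sq_matrix_def uniformity_sq_matrix_def
      to_matrix_inject[symmetric] zero_sq_matrix.rep_eq one_sq_matrix.rep_eq plus_sq_matrix.rep_eq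
      minus_sq_matrix.rep_eq uminus_sq_matrix.rep_eq times_sq_matrix.rep_eq scaleR_sq_matrix.rep_eq
      norm_sq_matrix.rep_eq algebra_simps matrix_mul_assoc matrix_add_ldistrib matrix_add_rdistrib
      scalar_matrix_assoc[symmetric] matrix_scalar_ac onorm_matrix_vector_mult_eq_0
      onorm_matrix_vector_mult_add onorm_matrix_vector_mult_scaleR onorm_matrix_vector_mult_mult
      onorm_matrix_vector_mult_mat_1 mat_1_neq_0)

end

lemma norm_le_onorm_matrix_vector_mult:
  "norm (A::real^'m::finite^'n::finite) \<le> real (CARD('n) * CARD('m)) * onorm ((*v) A)"
proof -
  have entry: "\<bar>A $ i $ j\<bar> \<le> onorm ((*v) A)" for i j
  proof -
    have "\<bar>A $ i $ j\<bar> = \<bar>(A *v axis j 1) $ i\<bar>"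
      by (simp add: matrix_vector_mult_basis column_def)
    also have "\<dots> \<le> norm (A *v axis j 1)"
      by (rule component_le_norm_cart)
    also have "\<dots> \<le> onorm ((*v) A) * norm (axis j (1::real))"
      by (rule onorm[OF matrix_vector_mul_bounded_linear])
    finally show ?thesis
      by simp
  qed
  have "norm A \<le> (\<Sum>i\<in>UNIV. norm (A $ i))"
    unfolding norm_vec_def by (rule L2_set_le_sum) simp
  also have "\<dots> \<le> (\<Sum>i\<in>(UNIV::'n set). \<Sum>j\<in>(UNIV::'m set). onorm ((*v) A))"
    by (intro sum_mono order_trans[OF norm_le_l1_cart] entry)
  finally show ?thesis
    by simp
qed

lemma bounded_linear_to_matrix: "bounded_linear (to_matrix :: 'd::finite sq_matrix \<Rightarrow> real^'d^'d)"
proof (rule bounded_linear_intro[where K="real (CARD('d) * CARD('d))"])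
  show "norm (to_matrix A) \<le> norm A * real (CARD('d) * CARD('d))" for A :: "'d sq_matrix"
    using norm_le_onorm_matrix_vector_mult[of "to_matrix A"] by (simp add: norm_sq_matrix.rep_eq mult.commute)
qed (simp_all add: plus_sq_matrix.rep_eq scaleR_sq_matrix.rep_eq)

lemma bounded_linear_of_matrix: "bounded_linear (of_matrix :: real^'d^'d \<Rightarrow> 'd::finite sq_matrix)"
  unfolding linear_conv_bounded_linear[symmetric]
  by (rule linearI)
    (simp_all add: to_matrix_inject[symmetric] plus_sq_matrix.rep_eq scaleR_sq_matrix.rep_eq of_matrix_inverse)

instance sq_matrix :: (finite) banach
proof
  fix X :: "nat \<Rightarrow> 'a sq_matrix"
  assume "Cauchy X"
  then have "Cauchy (\<lambda>n. to_matrix (X n))"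
    by (rule bounded_linear.Cauchy[OF bounded_linear_to_matrix])
  then obtain L where "(\<lambda>n. to_matrix (X n)) \<longlonglongrightarrow> L"
    using Cauchy_convergent convergent_def by blast
  then have "(\<lambda>n. of_matrix (to_matrix (X n))) \<longlonglongrightarrow> of_matrix L"
    by (rule bounded_linear.tendsto[OF bounded_linear_of_matrix])
  then show "convergent X"
    by (auto simp: to_matrix_inverse convergent_def)
qed

lemma to_matrix_power: "to_matrix (A ^ n) = matpow (to_matrix A) n"
  by (induction n) (simp_all add: one_sq_matrix.rep_eq times_sq_matrix.rep_eq)

lemma mat_exp_eq_exp: "mat_exp A = to_matrix (exp (of_matrix A))"
proof -
  have "(\<lambda>n. of_matrix A ^ n /\<^sub>R fact n) sums exp (of_matrix A)"
    unfolding exp_def by (rule summable_sums[OF summable_exp_generic])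
  then have "(\<lambda>n. to_matrix (of_matrix A ^ n /\<^sub>R fact n)) sums to_matrix (exp (of_matrix A))"
    by (rule bounded_linear.sums[OF bounded_linear_to_matrix])
  then have "(\<lambda>n. (1 / fact n) *\<^sub>R matpow A n) sums to_matrix (exp (of_matrix A))"
    by (simp add: scaleR_sq_matrix.rep_eq to_matrix_power of_matrix_inverse divide_inverse)
  then show ?thesis
    unfolding mat_exp_def by (rule sums_unique[symmetric])
qed

lemma continuous_matrix_semigroup_eq_mat_exp:
  fixes S :: "real \<Rightarrow> real^'d::finite^'d"
  assumes cont: "continuous_on {0..} S" and S0: "S 0 = mat 1"
    and mult: "\<And>t s. t \<ge> 0 \<Longrightarrow> s \<ge> 0 \<Longrightarrow> S (t + s) = S t ** S s"
  shows "\<exists>Z. \<forall>t\<ge>0. S t = mat_exp (t *\<^sub>R Z)"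
proof -
  define U where "U t = of_matrix (S t)" for t
  have "continuous_on {0..} U"
    unfolding U_def by (rule bounded_linear.continuous_on[OF bounded_linear_of_matrix cont])
  moreover have "U 0 = 1"
    by (simp add: U_def S0 to_matrix_inject[symmetric] one_sq_matrix.rep_eq of_matrix_inverse)
  moreover have "U (t + s) = U t * U s" if "t \<ge> 0" "s \<ge> 0" for t s
    using mult[OF that] by (simp add: U_def to_matrix_inject[symmetric] times_sq_matrix.rep_eq of_matrix_inverse)
  ultimately obtain Z where Z: "\<And>t. t \<ge> 0 \<Longrightarrow> U t = exp (t *\<^sub>R Z)"
    using continuous_semigroup_eq_exp[of U] by blast
  have "S t = mat_exp (t *\<^sub>R to_matrix Z)" if "t \<ge> 0" for t
  proof -
    have "S t = to_matrix (U t)"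
      by (simp add: U_def of_matrix_inverse)
    moreover have "of_matrix (t *\<^sub>R to_matrix Z) = t *\<^sub>R Z"
      by (simp add: to_matrix_inject[symmetric] scaleR_sq_matrix.rep_eq of_matrix_inverse)
    ultimately show ?thesis
      using Z[OF that] by (simp add: mat_exp_eq_exp)
  qed
  then show ?thesis
    by blast
qed

section \<open>Weyl operators\<close>

lemma cis_inner_eq_imp_eq:
  fixes b b' :: "'a::real_inner"
  assumes "c \<noteq> 0" and eq: "\<And>y. c * cis (a + b \<bullet> y) = c' * cis (a' + b' \<bullet> y)"
  shows "b = b'"
proof (rule ccontr)
  assume "b \<noteq> b'"
  define y where "y = (pi / ((b - b') \<bullet> (b - b'))) *\<^sub>R (b - b')"
  have "(b - b') \<bullet> y = pi"
    using \<open>b \<noteq> b'\<close> by (simp add: y_def)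
  have "c * cis a * cis (b \<bullet> y) = c' * cis a' * cis (b' \<bullet> y)"
    using eq[of y] by (simp add: cis_mult mult.assoc)
  moreover have "c * cis a = c' * cis a'"
    using eq[of 0] by simp
  moreover have "c * cis a \<noteq> 0"
    using \<open>c \<noteq> 0\<close> by simp
  ultimately have "cis (b' \<bullet> y) * cis ((b - b') \<bullet> y) = cis (b' \<bullet> y)"
    by (simp add: cis_mult inner_diff_left)
  then have "cis ((b - b') \<bullet> y) = 1"
    by simp
  then show False
    using \<open>(b - b') \<bullet> y = pi\<close> by simp
qed

lemma xi_eqI:
  fixes \<xi> \<eta> :: "('n::finite,'s::finite) xi"
  assumes "xi_u \<xi> = xi_u \<eta>" and "xi_v \<xi> = xi_v \<eta>" and "xi_k \<xi> = xi_k \<eta>"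
  shows "\<xi> = \<eta>"
  unfolding vec_eq_iff
proof
  fix i :: "('n + 'n) + 's"
  consider j where "i = Inl (Inl j)" | j where "i = Inl (Inr j)" | j where "i = Inr j"
    by (metis sum.exhaust)
  then show "\<xi> $ i = \<eta> $ i"
    using assms by cases (simp_all add: xi_u_def xi_v_def xi_k_def vec_eq_iff)
qed

lemma xi_zero [simp]: "xi_u 0 = 0" "xi_v 0 = 0" "xi_k 0 = 0"
  by (simp_all add: xi_u_def xi_v_def xi_k_def vec_eq_iff)

lemma hweyl_zero: "hweyl 0 = nunit"
  by (simp add: fun_eq_iff hweyl_def weyl1_def nunit_def)

lemma hweyl_apply_const_1:
  "hweyl \<xi> x (\<lambda>_. 1) q = cis (xi_u \<xi> \<bullet> xi_v \<xi> / 2 + (xi_k \<xi> \<bullet> x + xi_u \<xi> \<bullet> q))"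
  by (simp add: hweyl_def weyl1_def cis_conv_exp inner_commute exp_add[symmetric] algebra_simps)

lemma scaled_hweyl_eqD:
  fixes \<xi> \<eta> :: "('n::finite,'s::finite) xi"
  assumes eq: "(\<lambda>x \<psi> q. c * hweyl \<xi> x \<psi> q) = (\<lambda>x \<psi> q. c' * hweyl \<eta> x \<psi> q)"
  shows "c = c'" and "c \<noteq> 0 \<Longrightarrow> \<xi> = \<eta>"
proof -
  have eq_at: "c * hweyl \<xi> x \<psi> q = c' * hweyl \<eta> x \<psi> q" for x \<psi> q
    using eq by meson
  define \<alpha> where "\<alpha> \<zeta> = xi_u \<zeta> \<bullet> xi_v \<zeta> / 2" for \<zeta> :: "('n,'s) xi"
  have phase: "c * cis (\<alpha> \<xi> + (xi_k \<xi> \<bullet> x + xi_u \<xi> \<bullet> q)) = c' * cis (\<alpha> \<eta> + (xi_k \<eta> \<bullet> x + xi_u \<eta> \<bullet> q))"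
    for x q
    using eq_at[of x "\<lambda>_. 1" q] by (simp add: hweyl_apply_const_1 \<alpha>_def)
  show \<xi>\<eta>: "\<xi> = \<eta>" if "c \<noteq> 0"
  proof (rule xi_eqI)
    have "c * cis (\<alpha> \<xi> + xi_k \<xi> \<bullet> x) = c' * cis (\<alpha> \<eta> + xi_k \<eta> \<bullet> x)" for x
      using phase[of x 0] by simp
    then show "xi_k \<xi> = xi_k \<eta>"
      by (rule cis_inner_eq_imp_eq[OF that])
    have "c * cis (\<alpha> \<xi> + xi_u \<xi> \<bullet> q) = c' * cis (\<alpha> \<eta> + xi_u \<eta> \<bullet> q)" for q
      using phase[of 0 q] by simp
    then show "xi_u \<xi> = xi_u \<eta>"
      by (rule cis_inner_eq_imp_eq[OF that])
    show "xi_v \<xi> = xi_v \<eta>"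
    proof (rule ccontr)
      assume "xi_v \<xi> \<noteq> xi_v \<eta>"
      \<comment> \<open>\<open>W(\<xi>)\<close> moves a point mass at the origin to \<open>-v(\<xi>)\<close>, \<open>W(\<eta>)\<close> does not\<close>
      define \<delta> where "\<delta> p = (if p = 0 then 1 else 0 :: complex)" for p :: "real^'n"
      have "c * hweyl \<xi> 0 \<delta> (- xi_v \<xi>) = c' * hweyl \<eta> 0 \<delta> (- xi_v \<xi>)"
        by (rule eq_at)
      moreover have "hweyl \<eta> 0 \<delta> (- xi_v \<xi>) = 0"
        using \<open>xi_v \<xi> \<noteq> xi_v \<eta>\<close> by (simp add: hweyl_def weyl1_def \<delta>_def)
      moreover have "hweyl \<xi> 0 \<delta> (- xi_v \<xi>) \<noteq> 0"
        by (simp add: hweyl_def weyl1_def \<delta>_def)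
      ultimately show False
        using \<open>c \<noteq> 0\<close> by simp
    qed
  qed
  show "c = c'"
  proof (cases "c = 0")
    case True
    then show ?thesis
      using phase[of 0 0] by simp
  next
    case False
    then show ?thesis
      using phase[of 0 0] \<xi>\<eta> by simp
  qed
qed

lemma hweyl_in_weyl_span: "hweyl \<xi> \<in> weyl_span"
  unfolding weyl_span_def
  by (rule CollectI, rule exI[of _ 1], rule exI[of _ "\<lambda>_. 1"], rule exI[of _ "\<lambda>_. \<xi>"]) simp

section \<open>Quasi-free hybrid dynamical semigroups\<close>

lemma matrix_eq_if_eq_near_0:
  fixes A B :: "real^'m::finite^'n::finite"
  assumes "e > 0" and near: "\<And>\<xi>. norm \<xi> < e \<Longrightarrow> A *v \<xi> = B *v \<xi>"
  shows "A = B"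
proof -
  have "A *v \<xi> = B *v \<xi>" for \<xi>
  proof (cases "\<xi> = 0")
    case False
    define a where "a = e / (2 * norm \<xi>)"
    have "a > 0" and "norm (a *\<^sub>R \<xi>) < e"
      using \<open>e > 0\<close> False by (simp_all add: a_def)
    then show ?thesis
      using near[of "a *\<^sub>R \<xi>"] by (simp add: matrix_vector_mult_scaleR)
  qed simp
  then show ?thesis
    by (simp add: matrix_eq)
qed

locale qf_hybrid_semigroup =
  fixes T :: "real \<Rightarrow> ('n::finite,'s::finite) nel \<Rightarrow> ('n,'s) nel"
    and f :: "real \<Rightarrow> ('n,'s) xi \<Rightarrow> complex"
    and S :: "real \<Rightarrow> ('n,'s) mat"
  assumes T_linear: "t \<ge> 0 \<Longrightarrow> A \<in> weyl_span \<Longrightarrow> B \<in> weyl_span \<Longrightarrow>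
      T t (nlin a A b B) = nlin a (T t A) b (T t B)"
    and T_nunit: "t \<ge> 0 \<Longrightarrow> T t nunit = nunit"
    and T_0: "A \<in> weyl_span \<Longrightarrow> T 0 A = A"
    and T_T: "t \<ge> 0 \<Longrightarrow> s \<ge> 0 \<Longrightarrow> A \<in> weyl_span \<Longrightarrow> T t (T s A) = T (t + s) A"
    and T_hweyl: "t \<ge> 0 \<Longrightarrow> T t (hweyl \<xi>) = (\<lambda>x \<psi> q. f t \<xi> * hweyl (S t *v \<xi>) x \<psi> q)"
    and continuous_f: "t \<ge> 0 \<Longrightarrow> continuous_on UNIV (f t)"
    and continuous_S: "continuous_on {0..} S"

context qf_hybrid_semigroup
begin

lemma f_zero: "t \<ge> 0 \<Longrightarrow> f t 0 = 1"
  using T_hweyl[of t 0] T_nunit[of t] scaled_hweyl_eqD(1)[of 1 0 "f t 0" "S t *v 0"]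
  by (simp add: hweyl_zero)

lemma f_0_S_0: "f 0 \<xi> = 1" "S 0 *v \<xi> = \<xi>"
proof -
  have "(\<lambda>x \<psi> q. 1 * hweyl \<xi> x \<psi> q) = (\<lambda>x \<psi> q. f 0 \<xi> * hweyl (S 0 *v \<xi>) x \<psi> q)"
    using T_0[OF hweyl_in_weyl_span] T_hweyl[of 0 \<xi>] by simp
  from scaled_hweyl_eqD[OF this] show "f 0 \<xi> = 1" "S 0 *v \<xi> = \<xi>"
    by simp_all
qed

lemma T_T_hweyl:
  assumes "t \<ge> 0" "s \<ge> 0"
  shows "T s (T t (hweyl \<xi>)) = (\<lambda>x \<psi> q. (f s (S t *v \<xi>) * f t \<xi>) * hweyl (S s *v (S t *v \<xi>)) x \<psi> q)"
proof -
  have "T t (hweyl \<xi>) = nlin (f t \<xi>) (hweyl (S t *v \<xi>)) 0 (hweyl (S t *v \<xi>))"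
    using T_hweyl[OF assms(1)] by (simp add: nlin_def)
  then have "T s (T t (hweyl \<xi>)) = nlin (f t \<xi>) (T s (hweyl (S t *v \<xi>))) 0 (T s (hweyl (S t *v \<xi>)))"
    using T_linear[OF assms(2) hweyl_in_weyl_span hweyl_in_weyl_span] by simp
  then show ?thesis
    using T_hweyl[OF assms(2)] by (simp add: nlin_def fun_eq_iff)
qed

lemma f_cocycle_and_S_compose:
  assumes "t \<ge> 0" "s \<ge> 0"
  shows "f (t + s) \<xi> = f s (S t *v \<xi>) * f t \<xi>"
    and "f (t + s) \<xi> \<noteq> 0 \<Longrightarrow> S (t + s) *v \<xi> = S s *v (S t *v \<xi>)"
proof -
  have "t + s \<ge> 0"
    using assms by simp
  have "(\<lambda>x \<psi> q. f (t + s) \<xi> * hweyl (S (t + s) *v \<xi>) x \<psi> q) = T (t + s) (hweyl \<xi>)"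
    by (rule T_hweyl[OF \<open>t + s \<ge> 0\<close>, symmetric])
  also have "\<dots> = T s (T t (hweyl \<xi>))"
    by (metis T_T[OF assms(2,1) hweyl_in_weyl_span] add.commute)
  also have "\<dots> = (\<lambda>x \<psi> q. (f s (S t *v \<xi>) * f t \<xi>) * hweyl (S s *v (S t *v \<xi>)) x \<psi> q)"
    by (rule T_T_hweyl[OF assms])
  finally have "(\<lambda>x \<psi> q. f (t + s) \<xi> * hweyl (S (t + s) *v \<xi>) x \<psi> q)
      = (\<lambda>x \<psi> q. (f s (S t *v \<xi>) * f t \<xi>) * hweyl (S s *v (S t *v \<xi>)) x \<psi> q)" .
  from scaled_hweyl_eqD[OF this]
  show "f (t + s) \<xi> = f s (S t *v \<xi>) * f t \<xi>"
    and "f (t + s) \<xi> \<noteq> 0 \<Longrightarrow> S (t + s) *v \<xi> = S s *v (S t *v \<xi>)"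
    by blast+
qed

lemma S_add:
  assumes "t \<ge> 0" "s \<ge> 0"
  shows "S (t + s) = S t ** S s"
proof -
  have "s + t \<ge> 0"
    using assms by simp
  have "\<exists>e>0. \<forall>\<xi>\<in>UNIV. dist 0 \<xi> < e \<longrightarrow> f (s + t) \<xi> \<noteq> 0"
    by (rule continuous_on_avoid[OF continuous_f[OF \<open>s + t \<ge> 0\<close>] UNIV_I])
      (simp add: f_zero[OF \<open>s + t \<ge> 0\<close>])
  then obtain e where "e > 0" and nonzero: "\<And>\<xi>. dist 0 \<xi> < e \<Longrightarrow> f (s + t) \<xi> \<noteq> 0"
    by blast
  have "S (s + t) = S t ** S s"
  proof (rule matrix_eq_if_eq_near_0[OF \<open>e > 0\<close>])
    show "S (s + t) *v \<xi> = (S t ** S s) *v \<xi>" if "norm \<xi> < e" for \<xi>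
      using f_cocycle_and_S_compose(2)[OF assms(2,1) nonzero] that
      by (simp add: dist_norm matrix_vector_mul_assoc)
  qed
  then show ?thesis
    by (simp add: add.commute)
qed

lemma S_eq_mat_exp: "\<exists>Z. \<forall>t\<ge>0. S t = mat_exp (t *\<^sub>R Z)"
proof (rule continuous_matrix_semigroup_eq_mat_exp[OF continuous_S])
  show "S 0 = mat 1"
    using f_0_S_0(2) by (simp add: matrix_eq)
qed (rule S_add)

end

lemma qf_hybrid_semigroupI:
  assumes "qf_hybrid_dyn_semigroup T f S"
  shows "qf_hybrid_semigroup T f S"
  using assms unfolding qf_hybrid_dyn_semigroup_def qf_hybrid_semigroup_def
  by (elim conjE) (intro conjI allI impI; simp)

theorem proposition1:
  fixes T :: "real \<Rightarrow> ('n::finite,'s::finite) nel \<Rightarrow> ('n,'s) nel"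
    and f :: "real \<Rightarrow> ('n,'s) xi \<Rightarrow> complex"
    and S :: "real \<Rightarrow> ('n,'s) mat"
  assumes "qf_hybrid_dyn_semigroup T f S"
  shows "(\<exists>Z :: ('n,'s) mat. \<forall>t\<ge>0. S t = mat_exp (t *\<^sub>R Z))
       \<and> (\<forall>t\<ge>0. f t 0 = 1) \<and> (\<forall>\<xi>. f 0 \<xi> = 1)
       \<and> (\<forall>t\<ge>0. \<forall>s\<ge>0. \<forall>\<xi>. f (t + s) \<xi> = f s (S t *v \<xi>) * f t \<xi>)"
proof -
  interpret qf_hybrid_semigroup T f S
    by (rule qf_hybrid_semigroupI[OF assms])
  show ?thesis
    using S_eq_mat_exp f_zero f_0_S_0(1) f_cocycle_and_S_compose(1) by blast
qed

end
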